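(* Consider the sequences $(x_k),(y_k),(\nu_k),(\lambda_k)$ generated by Algorithm 2 (described in the context), and assume that at iteration $k\ge1$ the pair $(y_k,\nu_k)$ is computed in the approximate-solution branch, so that $\nu_k\in N_C(y_k)$ and $\|\lambda_k(F_{y_{k-1}}(y_k)+\nu_k)+y_k-x_{k-1}\|\le\hat\sigma\|y_k-y_{k-1}\|$. Then $$\frac{\lambda_kL}{2}\big\|\lambda_k(F(y_{k-1})+\nu_{k-1})+y_{k-1}-x_{k-1}\big\|\le\theta\ \Longrightarrow\ \frac{\lambda_kL}{2}\big\|\lambda_k(F(y_k)+\nu_k)+y_k-x_{k-1}\big\|\le\hat\theta.$$
   Context: Setting: $\mathcal H$ real Hilbert space; $C\subseteq\mathcal H$ nonempty closed convex; $N_C(x)=\{\nu:\langle\nu,y-x\rangle\le0\ \forall y\in C\}$ if $x\in C$, $N_C(x)=\emptyset$ otherwise. $F:C\to\mathcal H$ is monotone, continuously differentiable, and $\|F'(x)-F'(y)\|\le L\|x-y\|$ for all $x,y\in C$, with $L>0$; the set of $x$ with $0\in F(x)+N_C(x)$ is nonempty. For $y\in C$, $F_y(x):=F(y)+F'(y)(x-y)$. Parameters: $0\le\hat\sigma<1/2$; $0<\theta<(1-\hat\sigma)(1-2\hat\sigma)$; $\hat\theta:=\theta\big(\frac{\hat\sigma}{1-\hat\sigma}+\frac{\theta}{(1-\hat\sigma)^2}\big)$; $\eta>2\hat\theta/L$; $\tau:=\dfrac{2(\theta-\hat\theta)}{2\theta+\frac{\eta L}{2}+\sqrt{(2\theta+\frac{\eta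 L}{2})^2-4\theta(\theta-\hat\theta)}}$. Algorithm 2: input $x_0\in C$, $y_0:=x_0$, $\nu_0:=0$, $\lambda_1>0$ with $\lambda_1^2\|F(y_0)\|\le2\theta/L$. For $k=1,2,\dots$: if $F(y_{k-1})+\nu_{k-1}=0$, stop and return $y_{k-1}$. If $\frac{\lambda_kL}{2}\|\lambda_k(F(y_{k-1})+\nu_{k-1})+y_{k-1}-x_{k-1}\|\le\hat\theta$, set $y_k=y_{k-1}$, $\nu_k=\nu_{k-1}$; otherwise (approximate-solution branch) find any $(y_k,\nu_k)$ with $\nu_k\in N_C(y_k)$ and $\|\lambda_k(F_{y_{k-1}}(y_k)+\nu_k)+y_k-x_{k-1}\|\le\hat\sigma\|y_k-y_{k-1}\|$. Then, if $\lambda_k\|y_k-x_{k-1}\|\ge\eta$, set $x_k=x_{k-1}-\tau\lambda_k(F(y_k)+\nu_k)$ and $\lambda_{k+1}=(1-\tau)\lambda_k$; else set $x_k=x_{k-1}$ and $\lambda_{k+1}=\lambda_k/(1-\tau)$. Standing assumption: the algorithm never stops at the first test, i.e. $F(y_{k-1})+\nu_{k-1}\neq0$ for all $k$. *)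

theory Defs
  imports "HOL-Analysis.Analysis"
begin

definition normal_cone :: "'a::real_inner set \<Rightarrow> 'a \<Rightarrow> 'a set" where
  "normal_cone C x = (if x \<in> C then {v. \<forall>y\<in>C. v \<bullet> (y - x) \<le> 0} else {})"

definition linearization :: "('a::real_normed_vector \<Rightarrow> 'a) \<Rightarrow> ('a \<Rightarrow> ('a \<Rightarrow>\<^sub>L 'a)) \<Rightarrow> 'a \<Rightarrow> 'a \<Rightarrow> 'a" where
  "linearization F F' y x = F y + blinfun_apply (F' y) (x - y)"

end

theory Submission
  imports Defs
begin

text \<open>
  Write \<open>d = y\<^sub>k - y\<^sub>k\<^sub>-\<^sub>1\<close>. Since \<open>F\<close> is monotone, so is its linearization
  \<open>F\<^sub>y\<^sub>k\<^sub>-\<^sub>1\<close> (its derivative is positive semidefinite), and adding the monotone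
  normal cone shows that the inexact Newton step moves by at most
  \<open>\<parallel>d\<parallel> \<le> \<parallel>\<lambda>(F(y\<^sub>k\<^sub>-\<^sub>1) + \<nu>\<^sub>k\<^sub>-\<^sub>1) + y\<^sub>k\<^sub>-\<^sub>1 - x\<^sub>k\<^sub>-\<^sub>1\<parallel> / (1 - \<sigma>)\<close>. The Lipschitz
  derivative bounds the linearization error by \<open>L/2 \<parallel>d\<parallel>\<^sup>2\<close>, so with
  \<open>S = \<lambda>L/2 \<parallel>d\<parallel> \<le> \<theta>/(1 - \<sigma>)\<close> the new residual, scaled by \<open>\<lambda>L/2\<close>, is at most
  \<open>\<sigma>S + S\<^sup>2 \<le> \<theta>\<^sub>h\<close>; this is exactly where the formula for \<open>\<theta>\<^sub>h\<close> comes from.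
\<close>

lemma normal_cone_memD: "v \<in> normal_cone C x \<Longrightarrow> x \<in> C"
  by (simp add: normal_cone_def split: if_splits)

lemma normal_cone_monotone:
  assumes "v \<in> normal_cone C y" and "w \<in> normal_cone C z"
  shows "0 \<le> (v - w) \<bullet> (y - z)"
proof -
  have "v \<bullet> (z - y) \<le> 0" "w \<bullet> (y - z) \<le> 0"
    using assms normal_cone_memD[OF assms(1)] normal_cone_memD[OF assms(2)]
    by (auto simp: normal_cone_def)
  then show ?thesis
    by (simp add: inner_diff_left inner_diff_right inner_commute)
qed

lemma normal_cone_invariant:
  fixes \<nu> y :: "nat \<Rightarrow> 'a::real_inner" and j :: nat
  assumes "\<nu> 0 \<in> normal_cone C (y 0)"
    and "\<forall>j\<ge>1. (y j = y (j - 1) \<and> \<nu> j = \<nu> (j - 1)) \<or> \<nu> j \<in> normal_cone C (y j)"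
  shows "\<nu> j \<in> normal_cone C (y j)"
proof (induction j)
  case 0
  show ?case using assms(1) .
next
  case (Suc j)
  then show ?case using assms(2)[rule_format, of "Suc j"] by auto
qed

lemma linearization_error_le:
  fixes F :: "'a::real_normed_vector \<Rightarrow> 'a"
  assumes "convex C"
    and der: "\<forall>u\<in>C. (F has_derivative blinfun_apply (F' u)) (at u within C)"
    and lip: "\<forall>u\<in>C. \<forall>w\<in>C. norm (F' u - F' w) \<le> L * norm (u - w)"
    and u: "u \<in> C" and w: "w \<in> C"
  shows "norm (F w - linearization F F' u w) \<le> L / 2 * (norm (w - u))\<^sup>2"
proof -
  define d where "d = w - u"
  define g where "g t = u + t *\<^sub>R d" for t :: real
  define h where "h t = F (g t) - t *\<^sub>R F' u d" for t
  define \<phi> where "\<phi> t = L / 2 * (norm d)\<^sup>2 * t\<^sup>2" for t :: real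
  have gC: "g t \<in> C" if "0 \<le> t" "t \<le> 1" for t
  proof -
    have "g t = (1 - t) *\<^sub>R u + t *\<^sub>R w" by (simp add: g_def d_def algebra_simps)
    then show ?thesis using \<open>convex C\<close> u w that by (simp add: convex_def)
  qed
  have "continuous_on C F"
    by (rule has_derivative_continuous_on) (use der in blast)
  moreover have "continuous_on {0..1} g"
    unfolding g_def by (intro continuous_intros)
  ultimately have "continuous_on {0..1} (\<lambda>t. F (g t))"
    by (rule continuous_on_compose2) (auto intro: gC)
  then have h_cont: "continuous_on {0..1} h"
    unfolding h_def by (intro continuous_intros)
  have \<phi>_cont: "continuous_on {0..1} \<phi>"
    unfolding \<phi>_def by (intro continuous_intros)
  have h_deriv: "(h has_vector_derivative (F' (g t) d - F' u d)) (at t)"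
    if t: "0 < t" "t < 1" for t
  proof -
    have g_deriv: "(g has_derivative (\<lambda>s. s *\<^sub>R d)) (at t within {0<..<1})"
      unfolding g_def by (auto intro!: derivative_eq_intros)
    have "(F has_derivative F' (g t)) (at (g t) within g ` {0<..<1})"
      by (rule has_derivative_subset[of _ _ _ C]) (use der gC t in auto)
    from diff_chain_within[OF g_deriv this]
    have "(F \<circ> g has_derivative (\<lambda>s. F' (g t) (s *\<^sub>R d))) (at t within {0<..<1})"
      by (simp add: o_def)
    then have "(F \<circ> g has_derivative (\<lambda>s. s *\<^sub>R F' (g t) d)) (at t)"
      using at_within_open[of t "{0<..<1}"] t by (simp add: blinfun.scaleR_right)
    then show ?thesis
      unfolding h_def has_vector_derivative_def o_def
      by (auto intro!: derivative_eq_intros simp: algebra_simps)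
  qed
  have \<phi>_deriv: "(\<phi> has_vector_derivative (L * (norm d)\<^sup>2 * t)) (at t)" for t
    unfolding \<phi>_def has_real_derivative_iff_has_vector_derivative[symmetric]
    by (auto intro!: derivative_eq_intros)
  have deriv_le: "norm (F' (g t) d - F' u d) \<le> L * (norm d)\<^sup>2 * t" if t: "0 < t" "t < 1" for t
  proof -
    have "norm (F' (g t) d - F' u d) \<le> norm (F' (g t) - F' u) * norm d"
      by (metis blinfun.diff_left norm_blinfun)
    also have "\<dots> \<le> L * norm (g t - u) * norm d"
      using lip gC[of t] u t by (intro mult_right_mono) auto
    also have "\<dots> = L * (norm d)\<^sup>2 * t"
      using t by (simp add: g_def power2_eq_square)
    finally show ?thesis .
  qed
  have "norm (h 1 - h 0) \<le> \<phi> 1 - \<phi> 0"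
    by (rule differentiable_bound_general[OF zero_less_one h_cont \<phi>_cont h_deriv \<phi>_deriv deriv_le])
  then show ?thesis
    by (simp add: h_def g_def \<phi>_def d_def linearization_def algebra_simps)
qed

lemma monotone_imp_derivative_nonneg:
  fixes F :: "'a::real_inner \<Rightarrow> 'a"
  assumes "convex C"
    and mono: "\<forall>u\<in>C. \<forall>w\<in>C. 0 \<le> (F u - F w) \<bullet> (u - w)"
    and der: "\<forall>u\<in>C. (F has_derivative blinfun_apply (F' u)) (at u within C)"
    and lip: "\<forall>u\<in>C. \<forall>w\<in>C. norm (F' u - F' w) \<le> L * norm (u - w)"
    and u: "u \<in> C" and w: "w \<in> C"
  shows "0 \<le> F' u (w - u) \<bullet> (w - u)"
proof -
  define d where "d = w - u"
  define q where "q = F' u d \<bullet> d"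
  \<comment> \<open>monotonicity along \<open>u + t d\<close> gives \<open>0 \<le> t\<^sup>2 q + O(t\<^sup>3)\<close>; let \<open>t \<rightarrow> 0\<close>\<close>
  have q_ge: "- (L / 2 * (norm d) ^ 3) * t \<le> q" if t: "0 < t" "t < 1" for t
  proof -
    define z where "z = u + t *\<^sub>R d"
    have "z = (1 - t) *\<^sub>R u + t *\<^sub>R w" by (simp add: z_def d_def algebra_simps)
    then have z: "z \<in> C" using \<open>convex C\<close> u w t by (simp add: convex_def)
    define e where "e = F z - linearization F F' u z"
    have "e \<bullet> d \<le> norm e * norm d" by (rule norm_cauchy_schwarz)
    also have "\<dots> \<le> L / 2 * (norm (z - u))\<^sup>2 * norm d"
      unfolding e_def
      by (intro mult_right_mono linearization_error_le[OF \<open>convex C\<close> der lip u z]) simp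
    finally have e_le: "e \<bullet> d \<le> t\<^sup>2 * (L / 2 * (norm d) ^ 3)"
      using t by (simp add: z_def power2_eq_square power3_eq_cube algebra_simps)
    have "0 \<le> (F z - F u) \<bullet> (z - u)" using mono z u by blast
    also have "\<dots> = t * (t * q + e \<bullet> d)"
      by (simp add: e_def z_def q_def linearization_def blinfun.scaleR_right
          inner_add_left algebra_simps)
    finally have "0 \<le> t * q + e \<bullet> d"
      using t by (simp add: zero_le_mult_iff)
    with e_le have "0 \<le> t * (q + t * (L / 2 * (norm d) ^ 3))"
      by (simp add: power2_eq_square algebra_simps)
    then have "0 \<le> q + t * (L / 2 * (norm d) ^ 3)"
      using t by (simp add: zero_le_mult_iff)
    then show ?thesis by (simp add: algebra_simps)
  qed
  have "((\<lambda>t. - (L / 2 * (norm d) ^ 3) * t) \<longlongrightarrow> - (L / 2 * (norm d) ^ 3) * 0) (at_right 0)"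
    by (intro tendsto_intros)
  moreover have "\<forall>\<^sub>F t in at_right 0. - (L / 2 * (norm d) ^ 3) * t \<le> q"
    unfolding eventually_at_right_field using q_ge zero_less_one by blast
  ultimately have "0 \<le> q"
    by (intro tendsto_le[OF trivial_limit_at_right_real tendsto_const]) auto
  then show ?thesis by (simp add: q_def d_def)
qed

lemma inexact_newton_displacement_le:
  fixes F :: "'a::real_inner \<Rightarrow> 'a"
  assumes "convex C"
    and mono: "\<forall>u\<in>C. \<forall>w\<in>C. 0 \<le> (F u - F w) \<bullet> (u - w)"
    and der: "\<forall>u\<in>C. (F has_derivative blinfun_apply (F' u)) (at u within C)"
    and lip: "\<forall>u\<in>C. \<forall>w\<in>C. norm (F' u - F' w) \<le> L * norm (u - w)"
    and "0 \<le> lam" and \<mu>: "\<mu> \<in> normal_cone C v" and \<nu>: "\<nu> \<in> normal_cone C y"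
    and approx: "norm (lam *\<^sub>R (linearization F F' v y + \<nu>) + y - x) \<le> \<sigma> * norm (y - v)"
  shows "(1 - \<sigma>) * norm (y - v) \<le> norm (lam *\<^sub>R (F v + \<mu>) + v - x)"
proof -
  define d where "d = y - v"
  define a where "a = lam *\<^sub>R (F v + \<mu>) + v - x"
  define r where "r = lam *\<^sub>R (linearization F F' v y + \<nu>) + y - x"
  have "0 \<le> F' v d \<bullet> d"
    unfolding d_def using monotone_imp_derivative_nonneg[OF \<open>convex C\<close> mono der lip]
      normal_cone_memD[OF \<mu>] normal_cone_memD[OF \<nu>] by blast
  moreover have "0 \<le> (\<nu> - \<mu>) \<bullet> d"
    unfolding d_def by (rule normal_cone_monotone[OF \<nu> \<mu>])
  ultimately have "0 \<le> lam * (F' v d \<bullet> d + (\<nu> - \<mu>) \<bullet> d)"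
    using \<open>0 \<le> lam\<close> by simp
  also have "\<dots> = (r - a) \<bullet> d - (norm d)\<^sup>2"
    by (simp add: r_def a_def d_def linearization_def power2_norm_eq_inner
        inner_add_left inner_diff_left algebra_simps)
  finally have "(norm d)\<^sup>2 \<le> (r - a) \<bullet> d" by simp
  also have "\<dots> \<le> norm (r - a) * norm d" by (rule norm_cauchy_schwarz)
  also have "\<dots> \<le> (\<sigma> * norm d + norm a) * norm d"
    using approx norm_triangle_ineq4[of r a]
    by (intro mult_right_mono) (simp_all add: r_def d_def)
  finally have "norm d * norm d \<le> (\<sigma> * norm d + norm a) * norm d"
    by (simp add: power2_eq_square)
  then have "norm d \<le> \<sigma> * norm d + norm a"
    by (cases "d = 0") (simp_all add: mult_le_cancel_right)
  then show ?thesis by (simp add: a_def d_def algebra_simps)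
qed

lemma inexact_newton_residual_le:
  fixes F :: "'a::real_inner \<Rightarrow> 'a"
  assumes "convex C"
    and der: "\<forall>u\<in>C. (F has_derivative blinfun_apply (F' u)) (at u within C)"
    and lip: "\<forall>u\<in>C. \<forall>w\<in>C. norm (F' u - F' w) \<le> L * norm (u - w)"
    and "0 \<le> lam" and "v \<in> C" and "y \<in> C"
    and approx: "norm (lam *\<^sub>R (linearization F F' v y + \<nu>) + y - x) \<le> \<sigma> * norm (y - v)"
  shows "norm (lam *\<^sub>R (F y + \<nu>) + y - x)
    \<le> \<sigma> * norm (y - v) + lam * (L / 2 * (norm (y - v))\<^sup>2)"
proof -
  have "lam *\<^sub>R (F y + \<nu>) + y - x
      = (lam *\<^sub>R (linearization F F' v y + \<nu>) + y - x) + lam *\<^sub>R (F y - linearization F F' v y)"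
    by (simp add: algebra_simps)
  also have "norm \<dots> \<le> norm (lam *\<^sub>R (linearization F F' v y + \<nu>) + y - x)
      + lam * norm (F y - linearization F F' v y)"
    by (rule order_trans[OF norm_triangle_ineq]) (simp add: \<open>0 \<le> lam\<close>)
  also have "\<dots> \<le> \<sigma> * norm (y - v) + lam * (L / 2 * (norm (y - v))\<^sup>2)"
    using approx linearization_error_le[OF \<open>convex C\<close> der lip \<open>v \<in> C\<close> \<open>y \<in> C\<close>] \<open>0 \<le> lam\<close>
    by (intro add_mono mult_left_mono)
  finally show ?thesis .
qed

lemma theta_hat_bound:
  fixes \<sigma> \<theta> S :: real
  assumes "0 \<le> \<sigma>" "\<sigma> < 1" "0 \<le> S" "(1 - \<sigma>) * S \<le> \<theta>"
  shows "\<sigma> * S + S\<^sup>2 \<le> \<theta> * (\<sigma> / (1 - \<sigma>) + \<theta> / (1 - \<sigma>)\<^sup>2)"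
proof -
  have S: "S \<le> \<theta> / (1 - \<sigma>)"
    using assms by (simp add: pos_le_divide_eq mult.commute)
  have "\<sigma> * S + S\<^sup>2 \<le> \<sigma> * (\<theta> / (1 - \<sigma>)) + (\<theta> / (1 - \<sigma>))\<^sup>2"
    using S assms by (intro add_mono mult_left_mono power_mono) auto
  also have "\<dots> = \<theta> * (\<sigma> / (1 - \<sigma>) + \<theta> / (1 - \<sigma>)\<^sup>2)"
    by (simp add: power_divide power2_eq_square algebra_simps)
  finally show ?thesis .
qed

lemma inexact_newton_residual_le_theta_hat:
  fixes F :: "'a::real_inner \<Rightarrow> 'a" and \<sigma> \<theta> :: real
  assumes "convex C"
    and mono: "\<forall>u\<in>C. \<forall>w\<in>C. 0 \<le> (F u - F w) \<bullet> (u - w)"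
    and der: "\<forall>u\<in>C. (F has_derivative blinfun_apply (F' u)) (at u within C)"
    and lip: "\<forall>u\<in>C. \<forall>w\<in>C. norm (F' u - F' w) \<le> L * norm (u - w)"
    and "0 < L" and \<sigma>: "0 \<le> \<sigma>" "\<sigma> < 1" and "0 \<le> \<theta>"
    and \<mu>: "\<mu> \<in> normal_cone C v" and \<nu>: "\<nu> \<in> normal_cone C y"
    and approx: "norm (lam *\<^sub>R (linearization F F' v y + \<nu>) + y - x) \<le> \<sigma> * norm (y - v)"
    and prev: "lam * L / 2 * norm (lam *\<^sub>R (F v + \<mu>) + v - x) \<le> \<theta>"
  shows "lam * L / 2 * norm (lam *\<^sub>R (F y + \<nu>) + y - x) \<le> \<theta> * (\<sigma> / (1 - \<sigma>) + \<theta> / (1 - \<sigma>)\<^sup>2)"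
proof (cases "0 \<le> lam")
  case False
  then have "lam * L / 2 * norm (lam *\<^sub>R (F y + \<nu>) + y - x) \<le> 0"
    using \<open>0 < L\<close> by (simp add: mult_nonpos_nonneg)
  also have "0 \<le> \<theta> * (\<sigma> / (1 - \<sigma>) + \<theta> / (1 - \<sigma>)\<^sup>2)"
    using \<sigma> \<open>0 \<le> \<theta>\<close> by simp
  finally show ?thesis .
next
  case True
  define \<rho> where "\<rho> = lam * L / 2"
  define s where "s = norm (y - v)"
  have "0 \<le> \<rho>" using True \<open>0 < L\<close> by (simp add: \<rho>_def)
  have "(1 - \<sigma>) * s \<le> norm (lam *\<^sub>R (F v + \<mu>) + v - x)"
    unfolding s_def
    by (rule inexact_newton_displacement_le[OF \<open>convex C\<close> mono der lip True \<mu> \<nu> approx])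
  then have "(1 - \<sigma>) * (\<rho> * s) \<le> \<theta>"
    using \<open>0 \<le> \<rho>\<close> prev unfolding \<rho>_def[symmetric]
    by (metis mult.left_commute mult_left_mono order_trans)
  have "\<rho> * norm (lam *\<^sub>R (F y + \<nu>) + y - x) \<le> \<rho> * (\<sigma> * s + lam * (L / 2 * s\<^sup>2))"
    using inexact_newton_residual_le[OF \<open>convex C\<close> der lip True _ _ approx]
      normal_cone_memD[OF \<mu>] normal_cone_memD[OF \<nu>] \<open>0 \<le> \<rho>\<close>
    by (intro mult_left_mono) (simp_all add: s_def)
  also have "\<dots> = \<sigma> * (\<rho> * s) + (\<rho> * s)\<^sup>2"
    by (simp add: \<rho>_def power2_eq_square algebra_simps)
  also have "\<dots> \<le> \<theta> * (\<sigma> / (1 - \<sigma>) + \<theta> / (1 - \<sigma>)\<^sup>2)"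
    using \<sigma> \<open>0 \<le> \<rho>\<close> \<open>(1 - \<sigma>) * (\<rho> * s) \<le> \<theta>\<close>
    by (intro theta_hat_bound) (simp_all add: s_def)
  finally show ?thesis by (simp add: \<rho>_def)
qed

theorem proposition4p2:
  fixes C :: "'a::{real_inner, complete_space} set"
    and F :: "'a \<Rightarrow> 'a" and F' :: "'a \<Rightarrow> ('a \<Rightarrow>\<^sub>L 'a)"
    and L \<sigma>h \<theta> \<theta>h \<eta> \<tau> :: real
    and x y \<nu> :: "nat \<Rightarrow> 'a" and lam :: "nat \<Rightarrow> real" and k :: nat
  assumes C_ne: "C \<noteq> {}" and C_closed: "closed C" and C_convex: "convex C"
    and F_mono: "\<forall>u\<in>C. \<forall>w\<in>C. 0 \<le> (F u - F w) \<bullet> (u - w)"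
    and F_deriv: "\<forall>u\<in>C. (F has_derivative blinfun_apply (F' u)) (at u within C)"
    and F'_cont: "continuous_on C F'"
    and L_pos: "L > 0"
    and F'_lip: "\<forall>u\<in>C. \<forall>w\<in>C. norm (F' u - F' w) \<le> L * norm (u - w)"
    and sol_ne: "\<exists>u\<in>C. - F u \<in> normal_cone C u"
    and \<sigma>h: "0 \<le> \<sigma>h" "\<sigma>h < 1/2"
    and \<theta>: "0 < \<theta>" "\<theta> < (1 - \<sigma>h) * (1 - 2 * \<sigma>h)"
    and \<theta>h_def: "\<theta>h = \<theta> * (\<sigma>h / (1 - \<sigma>h) + \<theta> / (1 - \<sigma>h)\<^sup>2)"
    and \<eta>: "\<eta> > 2 * \<theta>h / L"
    and \<tau>_def: "\<tau> = 2 * (\<theta> - \<theta>h) /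
        (2 * \<theta> + \<eta> * L / 2 + sqrt ((2 * \<theta> + \<eta> * L / 2)\<^sup>2 - 4 * \<theta> * (\<theta> - \<theta>h)))"
    and x0: "x 0 \<in> C" and y0: "y 0 = x 0" and \<nu>0: "\<nu> 0 = 0"
    and lam1: "lam 1 > 0" "(lam 1)\<^sup>2 * norm (F (y 0)) \<le> 2 * \<theta> / L"
    and no_stop: "\<forall>j\<ge>1. F (y (j - 1)) + \<nu> (j - 1) \<noteq> 0"
    and step_y: "\<forall>j\<ge>1.
       (if lam j * L / 2 * norm (lam j *\<^sub>R (F (y (j - 1)) + \<nu> (j - 1)) + y (j - 1) - x (j - 1)) \<le> \<theta>h
        then y j = y (j - 1) \<and> \<nu> j = \<nu> (j - 1)
        else \<nu> j \<in> normal_cone C (y j) \<and>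
             norm (lam j *\<^sub>R (linearization F F' (y (j - 1)) (y j) + \<nu> j) + y j - x (j - 1))
               \<le> \<sigma>h * norm (y j - y (j - 1)))"
    and step_x: "\<forall>j\<ge>1.
       (if lam j * norm (y j - x (j - 1)) \<ge> \<eta>
        then x j = x (j - 1) - (\<tau> * lam j) *\<^sub>R (F (y j) + \<nu> j) \<and> lam (j + 1) = (1 - \<tau>) * lam j
        else x j = x (j - 1) \<and> lam (j + 1) = lam j / (1 - \<tau>))"
    and k: "k \<ge> 1"
    and branch: "\<not> (lam k * L / 2 * norm (lam k *\<^sub>R (F (y (k - 1)) + \<nu> (k - 1)) + y (k - 1) - x (k - 1)) \<le> \<theta>h)"
  shows "lam k * L / 2 * norm (lam k *\<^sub>R (F (y (k - 1)) + \<nu> (k - 1)) + y (k - 1) - x (k - 1)) \<le> \<theta>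
     \<longrightarrow> lam k * L / 2 * norm (lam k *\<^sub>R (F (y k) + \<nu> k) + y k - x (k - 1)) \<le> \<theta>h"
proof
  assume prev: "lam k * L / 2 * norm (lam k *\<^sub>R (F (y (k - 1)) + \<nu> (k - 1)) + y (k - 1) - x (k - 1)) \<le> \<theta>"
  have \<nu>_prev: "\<nu> (k - 1) \<in> normal_cone C (y (k - 1))"
  proof (rule normal_cone_invariant)
    show "\<nu> 0 \<in> normal_cone C (y 0)" using x0 y0 \<nu>0 by (simp add: normal_cone_def)
    show "\<forall>j\<ge>1. (y j = y (j - 1) \<and> \<nu> j = \<nu> (j - 1)) \<or> \<nu> j \<in> normal_cone C (y j)"
      using step_y by meson
  qed
  have \<nu>_k: "\<nu> k \<in> normal_cone C (y k)"
    and approx: "norm (lam k *\<^sub>R (linearization F F' (y (k - 1)) (y k) + \<nu> k) + y k - x (k - 1))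
      \<le> \<sigma>h * norm (y k - y (k - 1))"
    using step_y[rule_format, OF k] branch by simp_all
  show "lam k * L / 2 * norm (lam k *\<^sub>R (F (y k) + \<nu> k) + y k - x (k - 1)) \<le> \<theta>h"
    unfolding \<theta>h_def using \<sigma>h \<theta>
    by (intro inexact_newton_residual_le_theta_hat[OF C_convex F_mono F_deriv F'_lip L_pos
          _ _ _ \<nu>_prev \<nu>_k approx prev]) simp_all
qed

end
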